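(* Let $m\ge 3$, let $C$ be a set of $m$ candidates, and let $T$ be the set of all $m!$ strict rankings of $C$. Let $w=(w_1,\dots,w_m)$ satisfy $1=w_1\ge w_2\ge\cdots\ge w_m=0$, and for $t\in T$, $\alpha\in C$ let $\sigma_t(\alpha)=w_i$, where $i$ is the position of $\alpha$ in $t$. Suppose $n$ voters each independently choose a ranking uniformly at random from $T$, let $N_t$ be the number of voters choosing $t$, and let $|\alpha|=\sum_{t\in T}N_t\sigma_t(\alpha)$. Then $$\mathbb{P}\bigl(\text{the scores } |\alpha|,\ \alpha\in C,\ \text{are pairwise distinct}\bigr)\to 1\qquad\text{as } n\to\infty.$$ *)

theory Defs
  imports "HOL-Probability.Probability" "HOL-Combinatorics.Multiset_Permutations"
begin

text \<open>A strict ranking of C is a list enumerating C without repetition, best first.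
  The set T of all m! rankings is permutations_of_set C.\<close>

definition rankings :: "'a set \<Rightarrow> 'a list set" where
  "rankings C = permutations_of_set C"

definition position :: "'a list \<Rightarrow> 'a \<Rightarrow> nat" where
  "position t a = (THE i. i < length t \<and> t ! i = a) + 1"

definition sigma :: "(nat \<Rightarrow> real) \<Rightarrow> 'a list \<Rightarrow> 'a \<Rightarrow> real" where
  "sigma w t a = w (position t a)"

definition vote_count :: "nat \<Rightarrow> (nat \<Rightarrow> 'a list) \<Rightarrow> 'a list \<Rightarrow> nat" where
  "vote_count n p t = card {i \<in> {..<n}. p i = t}"

definition score :: "'a set \<Rightarrow> (nat \<Rightarrow> real) \<Rightarrow> nat \<Rightarrow> (nat \<Rightarrow> 'a list) \<Rightarrow> 'a \<Rightarrow> real" where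
  "score C w n p a = (\<Sum>t\<in>rankings C. real (vote_count n p t) * sigma w t a)"

definition profile_pmf :: "'a set \<Rightarrow> nat \<Rightarrow> (nat \<Rightarrow> 'a list) pmf" where
  "profile_pmf C n = Pi_pmf {..<n} undefined (\<lambda>_. pmf_of_set (rankings C))"

end

theory Submission
  imports Defs "HOL-Real_Asymp.Real_Asymp"
begin

text \<open>Fix candidates \<open>a \<noteq> b\<close>. Swapping \<open>a\<close> and \<open>b\<close> in the ballots of a set \<open>B\<close> of voters is a
  bijection of the uniform profile space, and it subtracts from \<open>|a| - |b|\<close> twice the contribution
  of the voters in \<open>B\<close>. Averaging over all \<open>2^n\<close> sets \<open>B\<close> therefore bounds the probability of a
  tie by the expectation of \<open>(k choose k div 2) / 2^k \<le> 1 / sqrt (k + 1)\<close>, the largest atom of a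
  sum of \<open>k\<close> fair signs, where \<open>k\<close> counts the voters ranking \<open>a\<close> first and \<open>b\<close> last (each
  contributing \<open>w 1 - w m\<close>) and is binomially distributed. By Hoeffding's inequality \<open>k \<ge> n q / 2\<close>
  except with probability \<open>exp (- n q\<^sup>2 / 2)\<close>, so ties become unlikely, and a union bound over the
  pairs finishes the proof.\<close>

lemma position_nth:
  assumes "distinct t" "i < length t"
  shows "position t (t ! i) = Suc i"
proof -
  have "(THE j. j < length t \<and> t ! j = t ! i) = i"
    by (rule the_equality) (use assms in \<open>auto simp: nth_eq_iff_index_eq\<close>)
  then show ?thesis by (simp add: position_def)
qed

lemma position_map_transpose:
  "position (map (Transposition.transpose a b) t) a = position t b"
  "position (map (Transposition.transpose a b) t) b = position t a"
proof -
  have "(i < length (map (Transposition.transpose a b) t) \<and> map (Transposition.transpose a b) t ! i = a)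
        \<longleftrightarrow> (i < length t \<and> t ! i = b)"
       "(i < length (map (Transposition.transpose a b) t) \<and> map (Transposition.transpose a b) t ! i = b)
        \<longleftrightarrow> (i < length t \<and> t ! i = a)" for i
    by (auto simp: transpose_eq_iff)
  then show "position (map (Transposition.transpose a b) t) a = position t b"
            "position (map (Transposition.transpose a b) t) b = position t a"
    by (simp_all only: position_def)
qed

lemma map_transpose_in_rankings:
  assumes "a \<in> C" "b \<in> C" "t \<in> rankings C"
  shows "map (Transposition.transpose a b) t \<in> rankings C"
  using assms by (auto simp: rankings_def permutations_of_set_def distinct_map)

lemma rankings_nonempty: "finite C \<Longrightarrow> rankings C \<noteq> {}"
  using finite_distinct_list by (force simp: rankings_def permutations_of_set_def)

lemma ranking_first_last_exists:
  assumes "finite C" "a \<in> C" "b \<in> C" "a \<noteq> b"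
  obtains t where "t \<in> rankings C" "position t a = 1" "position t b = card C"
proof -
  obtain xs where xs: "set xs = C - {a, b}" "distinct xs"
    using finite_distinct_list[of "C - {a, b}"] assms(1) by auto
  define t where "t = a # xs @ [b]"
  have "distinct t" "set t = C"
    using xs assms(2-4) by (auto simp: t_def)
  then have t: "t \<in> rankings C" "length t = card C"
    by (auto simp: rankings_def permutations_of_set_def distinct_card)
  have "t ! 0 = a" "t ! (length t - 1) = b"
    by (simp_all add: t_def nth_append)
  then have "position t a = 1" "position t b = length t"
    using position_nth[OF \<open>distinct t\<close>, of 0] position_nth[OF \<open>distinct t\<close>, of "length t - 1"]
    by (simp_all add: t_def)
  then show ?thesis
    using that t by simp
qed

abbreviation profiles :: "'a set \<Rightarrow> nat \<Rightarrow> (nat \<Rightarrow> 'a list) set" where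
  "profiles C n \<equiv> PiE_dflt {..<n} undefined (\<lambda>_. rankings C)"

lemma finite_profiles: "finite (profiles C n)"
  by (intro finite_PiE_dflt) (simp_all add: rankings_def)

lemma profile_pmf_eq_pmf_of_set:
  "finite C \<Longrightarrow> profile_pmf C n = pmf_of_set (profiles C n)"
  unfolding profile_pmf_def rankings_def
  by (rule Pi_pmf_of_set) (auto simp: rankings_nonempty[unfolded rankings_def])

lemma score_eq_sum_votes:
  assumes "finite C" "p \<in> profiles C n"
  shows "score C w n p a = (\<Sum>i<n. sigma w (p i) a)"
proof -
  have "score C w n p a = (\<Sum>t\<in>rankings C. \<Sum>i\<in>{i\<in>{..<n}. p i = t}. sigma w (p i) a)"
    unfolding score_def vote_count_def by (intro sum.cong refl) auto
  also have "\<dots> = (\<Sum>i<n. sigma w (p i) a)"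
    by (rule sum.group) (use assms in \<open>auto simp: PiE_dflt_def rankings_def\<close>)
  finally show ?thesis .
qed

definition swap_votes :: "'a \<Rightarrow> 'a \<Rightarrow> nat set \<Rightarrow> (nat \<Rightarrow> 'a list) \<Rightarrow> nat \<Rightarrow> 'a list" where
  "swap_votes a b B p = (\<lambda>i. if i \<in> B then map (Transposition.transpose a b) (p i) else p i)"

lemma swap_votes_involutory [simp]: "swap_votes a b B (swap_votes a b B p) = p"
  by (auto simp: swap_votes_def map_idI)

lemma swap_votes_in_profiles:
  assumes "a \<in> C" "b \<in> C" "B \<subseteq> {..<n}" "p \<in> profiles C n"
  shows "swap_votes a b B p \<in> profiles C n"
  using assms map_transpose_in_rankings[OF assms(1,2)] by (auto simp: swap_votes_def PiE_dflt_def)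

lemma bij_betw_swap_votes:
  assumes "a \<in> C" "b \<in> C" "B \<subseteq> {..<n}"
  shows "bij_betw (swap_votes a b B) (profiles C n) (profiles C n)"
  using swap_votes_in_profiles[OF assms]
  by (intro bij_betw_byWitness[where f' = "swap_votes a b B"]) auto

lemma score_diff_swap_votes:
  assumes "finite C" "a \<in> C" "b \<in> C" "B \<subseteq> {..<n}" "p \<in> profiles C n"
  shows "score C w n (swap_votes a b B p) a - score C w n (swap_votes a b B p) b =
         score C w n p a - score C w n p b - 2 * (\<Sum>i\<in>B. sigma w (p i) a - sigma w (p i) b)"
proof -
  define x where "x i = sigma w (p i) a - sigma w (p i) b" for i
  have "score C w n (swap_votes a b B p) a - score C w n (swap_votes a b B p) b =
        (\<Sum>i<n. sigma w (swap_votes a b B p i) a - sigma w (swap_votes a b B p i) b)"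
    by (simp add: score_eq_sum_votes[OF assms(1) swap_votes_in_profiles[OF assms(2-5)]] sum_subtractf)
  also have "\<dots> = (\<Sum>i<n. x i - (if i \<in> B then 2 * x i else 0))"
    by (intro sum.cong refl) (simp add: x_def swap_votes_def sigma_def position_map_transpose)
  also have "\<dots> = (\<Sum>i<n. x i) - 2 * sum x B"
    using assms(4) by (simp add: sum_subtractf sum.If_cases sum_distrib_left Int_absorb1)
  finally show ?thesis
    by (simp add: x_def score_eq_sum_votes[OF assms(1,5)] sum_subtractf)
qed

lemma card_mult_eq_sum_card_bij_betw:
  assumes "finite \<Omega>" "finite \<B>" "Z \<subseteq> \<Omega>" "\<And>B. B \<in> \<B> \<Longrightarrow> bij_betw (f B) \<Omega> \<Omega>"
  shows "card Z * card \<B> = (\<Sum>x\<in>\<Omega>. card {B \<in> \<B>. f B x \<in> Z})"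
proof -
  have preimage: "card {x \<in> \<Omega>. f B x \<in> Z} = card Z" if "B \<in> \<B>" for B
  proof -
    have "bij_betw (f B) {x \<in> \<Omega>. f B x \<in> Z} Z"
      using assms(3) bij_betw_imp_surj_on[OF assms(4)[OF that]]
      by (intro bij_betw_subset[OF assms(4)[OF that]]) auto
    then show ?thesis
      by (rule bij_betw_same_card)
  qed
  have "(\<Sum>x\<in>\<Omega>. card {B \<in> \<B>. f B x \<in> Z}) = (\<Sum>x\<in>\<Omega>. \<Sum>B\<in>\<B>. if f B x \<in> Z then 1 else 0)"
    using assms(2) by (simp add: sum.If_cases Int_def)
  also have "\<dots> = (\<Sum>B\<in>\<B>. \<Sum>x\<in>\<Omega>. if f B x \<in> Z then 1 else 0)"
    by (rule sum.swap)
  also have "\<dots> = (\<Sum>B\<in>\<B>. card Z)"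
    using assms(1) by (intro sum.cong refl) (simp add: sum.If_cases Int_def preimage)
  finally show ?thesis
    by simp
qed

text \<open>Littlewood--Offord for equal steps: within each translate of \<open>Pow J\<close> by a subset of \<open>K\<close>,
  the sets with a prescribed sum all have the same cardinality.\<close>

lemma card_subsets_sum_eq_le:
  fixes x :: "'b \<Rightarrow> real"
  assumes "finite J" "finite K" "J \<inter> K = {}" "\<And>i. i \<in> J \<Longrightarrow> x i = d" "d \<noteq> 0"
  shows "card {B. B \<subseteq> J \<union> K \<and> sum x B = c} \<le> 2 ^ card K * (card J choose (card J div 2))"
  using assms(2,3)
proof (induction K arbitrary: c rule: finite_induct)
  case empty
  have "sum x B = d * card B" if "B \<subseteq> J" for B
    using that assms(4) by (simp add: subset_iff)
  then have "{B. B \<subseteq> J \<union> {} \<and> sum x B = c} \<subseteq> {B. B \<subseteq> J \<and> card B = nat \<lfloor>c / d\<rfloor>}"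
    using assms(5) by auto
  from card_mono[OF _ this] have "card {B. B \<subseteq> J \<union> {} \<and> sum x B = c} \<le> card J choose nat \<lfloor>c / d\<rfloor>"
    using assms(1) by (simp add: n_subsets)
  also have "\<dots> \<le> card J choose (card J div 2)"
    by (rule binomial_maximum)
  finally show ?case by simp
next
  case (insert a K)
  let ?S = "\<lambda>c. {B. B \<subseteq> J \<union> K \<and> sum x B = c}"
  have finite_S: "finite (?S c)" for c
    using insert.hyps(1) assms(1) by simp
  have "{B. B \<subseteq> J \<union> insert a K \<and> sum x B = c} \<subseteq> ?S c \<union> insert a ` ?S (c - x a)"
  proof
    fix B assume B: "B \<in> {B. B \<subseteq> J \<union> insert a K \<and> sum x B = c}"
    show "B \<in> ?S c \<union> insert a ` ?S (c - x a)"
    proof (cases "a \<in> B")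
      case True
      have "finite B"
        using B insert.hyps(1) assms(1) by (auto intro: finite_subset)
      then have "B - {a} \<in> ?S (c - x a)"
        using B True insert.prems by (auto simp: sum.remove)
      then show ?thesis
        using True by (auto intro!: image_eqI[of _ _ "B - {a}"])
    qed (use B in auto)
  qed
  then have "card {B. B \<subseteq> J \<union> insert a K \<and> sum x B = c} \<le> card (?S c \<union> insert a ` ?S (c - x a))"
    using finite_S by (intro card_mono) auto
  also have "\<dots> \<le> card (?S c) + card (?S (c - x a))"
    using card_Un_le[of "?S c" "insert a ` ?S (c - x a)"] card_image_le[OF finite_S[of "c - x a"], of "insert a"]
    by linarith
  also have "\<dots> \<le> 2 * (2 ^ card K * (card J choose (card J div 2)))"
    using insert.IH[of c] insert.IH[of "c - x a"] insert.prems by simp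
  also have "\<dots> = 2 ^ card (insert a K) * (card J choose (card J div 2))"
    using insert.hyps by simp
  finally show ?case .
qed

text \<open>The largest atom of \<open>binomial_pmf k (1/2)\<close>.\<close>

definition central_binomial_prob :: "nat \<Rightarrow> real" where
  "central_binomial_prob k = real (k choose (k div 2)) / 2 ^ k"

lemma central_binomial_Suc:
  "Suc r * ((2 * Suc r) choose Suc r) = 2 * (2 * r + 1) * ((2 * r) choose r)"
proof -
  have two: "2 * Suc r = Suc (Suc (2 * r))" by simp
  have sym: "Suc (2 * r) choose Suc r = Suc (2 * r) choose r"
    using binomial_symmetric[of "Suc r" "Suc (2 * r)"] by simp
  have "Suc r * ((2 * Suc r) choose Suc r) = 2 * Suc r * (Suc (2 * r) choose r)"
    unfolding two by (rule Suc_times_binomial)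
  also have "\<dots> = 2 * (Suc r * (Suc (2 * r) choose Suc r))"
    unfolding sym by (rule mult.assoc)
  also have "\<dots> = 2 * (Suc (2 * r) * ((2 * r) choose r))"
    by (simp only: Suc_times_binomial)
  finally show ?thesis by (metis Suc_eq_plus1 mult.assoc)
qed

lemma central_binomial_sq_le: "real ((2 * r) choose r) ^ 2 * (2 * real r + 1) \<le> 16 ^ r"
proof (induction r)
  case 0
  then show ?case by simp
next
  case (Suc r)
  define c where "c = real ((2 * r) choose r)"
  define c' where "c' = real ((2 * Suc r) choose Suc r)"
  have rec: "(real r + 1) * c' = 2 * (2 * real r + 1) * c"
    using arg_cong[OF central_binomial_Suc[of r], of real] unfolding c_def c'_def
    by (simp only: of_nat_mult of_nat_Suc of_nat_add of_nat_numeral of_nat_1 add.commute)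
  have "(real r + 1)^2 * (c'^2 * (2 * real r + 3)) =
        4 * (2 * real r + 1) * (2 * real r + 3) * (c^2 * (2 * real r + 1))"
    by (simp add: power_mult_distrib[symmetric] rec) algebra
  also have "\<dots> \<le> 4 * (2 * real r + 1) * (2 * real r + 3) * 16 ^ r"
    using Suc.IH by (simp add: c_def)
  also have "\<dots> \<le> (real r + 1)^2 * 16 ^ Suc r"
    by (simp add: power2_eq_square algebra_simps)
  finally have "c'^2 * (2 * real (Suc r) + 1) \<le> 16 ^ Suc r"
    by (simp add: add.commute mult_le_cancel_left_pos)
  then show ?case by (simp add: c'_def)
qed

lemma central_binomial_prob_odd: "central_binomial_prob (2 * r + 1) = central_binomial_prob (2 * r + 2)"
proof -
  have "(2 * r + 2) choose (r + 1) = 2 * ((2 * r + 1) choose r)"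
    using central_binomial_odd[of "2 * r + 1"] by simp
  then show ?thesis
    by (simp add: central_binomial_prob_def)
qed

lemma central_binomial_prob_sq_le: "central_binomial_prob k ^ 2 * (real k + 1) \<le> 1"
proof -
  have even: "central_binomial_prob (2 * r) ^ 2 * (2 * real r + 1) \<le> 1" for r
  proof -
    have "((4::real) ^ r) ^ 2 = 16 ^ r"
      by (simp add: power_even_eq[symmetric] power_mult)
    then have "central_binomial_prob (2 * r) ^ 2 = real ((2 * r) choose r) ^ 2 / 16 ^ r"
      by (simp add: central_binomial_prob_def power_mult power_divide)
    then have "central_binomial_prob (2 * r) ^ 2 * (2 * real r + 1) =
               real ((2 * r) choose r) ^ 2 * (2 * real r + 1) / 16 ^ r"
      by simp
    also have "\<dots> \<le> 1"
      using central_binomial_sq_le[of r] by simp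
    finally show ?thesis .
  qed
  show ?thesis
  proof (cases "even k")
    case True
    then show ?thesis using even[of "k div 2"] by (auto elim!: evenE)
  next
    case False
    then obtain r where k: "k = 2 * r + 1" by (blast elim: oddE)
    have "central_binomial_prob k = central_binomial_prob (2 * (r + 1))"
      using central_binomial_prob_odd[of r] by (simp add: k)
    moreover have "real k + 1 \<le> 2 * real (r + 1) + 1"
      by (simp add: k)
    ultimately have "central_binomial_prob k ^ 2 * (real k + 1) \<le>
               central_binomial_prob (2 * (r + 1)) ^ 2 * (2 * real (r + 1) + 1)"
      by (simp add: mult_left_mono)
    also have "\<dots> \<le> 1" by (rule even)
    finally show ?thesis .
  qed
qed

lemma central_binomial_prob_le: "central_binomial_prob k \<le> 1 / sqrt (real k + 1)"
proof -
  have "central_binomial_prob k ^ 2 \<le> (1 / sqrt (real k + 1)) ^ 2"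
    using central_binomial_prob_sq_le[of k] by (simp add: power_divide field_simps)
  then show ?thesis
    by (rule power2_le_imp_le) simp
qed

lemma map_mem_pmf_of_set:
  assumes "finite T" "T \<noteq> {}"
  shows "map_pmf (\<lambda>t. t \<in> A) (pmf_of_set T) = bernoulli_pmf (card (A \<inter> T) / card T)"
proof -
  have eq: "spmf_of_pmf (map_pmf (\<lambda>t. t \<in> A) (pmf_of_set T)) = spmf_of_pmf (bernoulli_pmf (card (A \<inter> T) / card T))"
    using map_mem_spmf_of_set[OF assms, of A] assms by (simp flip: spmf_of_pmf_pmf_of_set)
  show ?thesis
    by (rule pmf_eqI) (use arg_cong[OF eq, of "\<lambda>p. spmf p _"] in simp)
qed

lemma binomial_pmf_altdef_pmf_of_set:
  assumes "finite I" "finite T" "T \<noteq> {}"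
  shows "binomial_pmf (card I) (card (A \<inter> T) / card T) =
         map_pmf (\<lambda>p. card {i \<in> I. p i \<in> A}) (Pi_pmf I d (\<lambda>_. pmf_of_set T))"
proof -
  let ?q = "card (A \<inter> T) / card T"
  have "?q \<in> {0..1}"
    using assms(2,3) card_mono[OF assms(2), of "A \<inter> T"] by (auto simp: card_gt_0_iff)
  then have "binomial_pmf (card I) ?q =
             map_pmf (\<lambda>f. card {i \<in> I. f i}) (Pi_pmf I (d \<in> A) (\<lambda>_. map_pmf (\<lambda>t. t \<in> A) (pmf_of_set T)))"
    using assms by (simp add: binomial_pmf_altdef' map_mem_pmf_of_set)
  also have "Pi_pmf I (d \<in> A) (\<lambda>_. map_pmf (\<lambda>t. t \<in> A) (pmf_of_set T)) =
             map_pmf (\<lambda>p. (\<lambda>t. t \<in> A) \<circ> p) (Pi_pmf I d (\<lambda>_. pmf_of_set T))"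
    using assms(1) by (rule Pi_pmf_map) simp
  finally show ?thesis
    by (simp add: map_pmf_comp)
qed

lemma expectation_central_binomial_prob_tendsto_0:
  assumes "0 < q" "q \<le> 1"
  shows "(\<lambda>n. measure_pmf.expectation (binomial_pmf n q) central_binomial_prob) \<longlonglongrightarrow> 0"
proof (rule tendsto_sandwich[of "\<lambda>_. 0" _ _ "\<lambda>n. exp (- (q\<^sup>2 / 2) * real n) + sqrt (2 / (q * real n))"])
  show "\<forall>\<^sub>F n in sequentially. 0 \<le> measure_pmf.expectation (binomial_pmf n q) central_binomial_prob"
    by (intro always_eventually allI integral_nonneg) (simp add: central_binomial_prob_def)
  show "\<forall>\<^sub>F n in sequentially. measure_pmf.expectation (binomial_pmf n q) central_binomial_prob
          \<le> exp (- (q\<^sup>2 / 2) * real n) + sqrt (2 / (q * real n))"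
    using eventually_gt_at_top[of 0]
  proof eventually_elim
    case (elim n)
    define s where "s = sqrt (2 / (q * real n))"
    define L where "L = {k. real k \<le> real n * q - real n * q / 2}"
    have "central_binomial_prob k \<le> indicator L k + s" for k
    proof (cases "k \<in> L")
      case True
      have "central_binomial_prob k \<le> 1"
        using central_binomial_prob_le[of k] order_trans by (force simp: divide_le_eq)
      moreover have "0 \<le> s"
        using elim assms(1) by (simp add: s_def)
      ultimately show ?thesis
        using True by simp
    next
      case False
      then have "\<not> real k \<le> real n * q - real n * q / 2"
        by (simp add: L_def)
      then have "real n * q / 2 \<le> real k + 1"
        by linarith
      then have "1 / (real k + 1) \<le> 2 / (q * real n)"
        using elim assms(1) by (simp add: field_simps)
      then have "1 / sqrt (real k + 1) \<le> s"
        unfolding s_def by (metis real_sqrt_le_mono real_sqrt_divide real_sqrt_one)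
      then show ?thesis
        using False central_binomial_prob_le[of k] by simp
    qed
    then have "measure_pmf.expectation (binomial_pmf n q) central_binomial_prob \<le>
               measure_pmf.expectation (binomial_pmf n q) (\<lambda>k. indicator L k + s)"
      using assms by (intro integral_mono) auto
    also have "\<dots> = measure_pmf.prob (binomial_pmf n q) L + s"
      using assms by (subst Bochner_Integration.integral_add) auto
    also have "measure_pmf.prob (binomial_pmf n q) L \<le> exp (-2 * (real n * q / 2)\<^sup>2 / real n)"
      using binomial_distribution.prob_le[of q n "real n * q / 2"] elim assms
      by (simp add: binomial_distribution_def L_def)
    also have "-2 * (real n * q / 2)\<^sup>2 / real n = - (q\<^sup>2 / 2) * real n"
      using elim by (simp add: power2_eq_square field_simps)
    finally show ?case
      by (simp add: s_def)
  qed
  show "(\<lambda>n. exp (- (q\<^sup>2 / 2) * real n) + sqrt (2 / (q * real n))) \<longlonglongrightarrow> 0"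
    using assms(1) by (intro tendsto_add_zero; real_asymp)
qed simp

lemma prob_inj_on_tendsto_1:
  fixes M :: "nat \<Rightarrow> 'b pmf" and X :: "nat \<Rightarrow> 'b \<Rightarrow> 'a \<Rightarrow> 'c"
  assumes "finite C"
    and "\<And>a b. a \<in> C \<Longrightarrow> b \<in> C \<Longrightarrow> a \<noteq> b \<Longrightarrow>
           (\<lambda>n. measure_pmf.prob (M n) {\<omega>. X n \<omega> a = X n \<omega> b}) \<longlonglongrightarrow> 0"
  shows "(\<lambda>n. measure_pmf.prob (M n) {\<omega>. inj_on (X n \<omega>) C}) \<longlonglongrightarrow> 1"
proof -
  define P where "P = {(a, b) \<in> C \<times> C. a \<noteq> b}"
  define tie where "tie n = (\<lambda>(a, b). {\<omega>. X n \<omega> a = X n \<omega> b})" for n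
  have "P \<subseteq> C \<times> C"
    by (auto simp: P_def)
  then have "finite P"
    by (rule finite_subset) (use assms(1) in simp)
  have ties_vanish: "(\<lambda>n. \<Sum>ab\<in>P. measure_pmf.prob (M n) (tie n ab)) \<longlonglongrightarrow> 0"
  proof (rule tendsto_null_sum)
    fix ab assume "ab \<in> P"
    then show "(\<lambda>n. measure_pmf.prob (M n) (tie n ab)) \<longlonglongrightarrow> 0"
      using assms(2) by (auto simp: P_def tie_def)
  qed
  have lower: "1 - (\<Sum>ab\<in>P. measure_pmf.prob (M n) (tie n ab)) \<le> measure_pmf.prob (M n) {\<omega>. inj_on (X n \<omega>) C}" for n
  proof -
    have "- {\<omega>. inj_on (X n \<omega>) C} \<subseteq> (\<Union>ab\<in>P. tie n ab)"
      by (auto simp: inj_on_def P_def tie_def)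
    then have "measure_pmf.prob (M n) (- {\<omega>. inj_on (X n \<omega>) C}) \<le> measure_pmf.prob (M n) (\<Union>ab\<in>P. tie n ab)"
      by (rule measure_pmf.finite_measure_mono) simp
    also have "\<dots> \<le> (\<Sum>ab\<in>P. measure_pmf.prob (M n) (tie n ab))"
      using \<open>finite P\<close> by (rule measure_pmf.finite_measure_subadditive_finite) simp
    finally show ?thesis
      using measure_pmf.prob_compl[of "{\<omega>. inj_on (X n \<omega>) C}" "M n"] by (simp add: Compl_eq_Diff_UNIV)
  qed
  have lim: "(\<lambda>n. 1 - (\<Sum>ab\<in>P. measure_pmf.prob (M n) (tie n ab))) \<longlonglongrightarrow> 1"
    using tendsto_diff[OF tendsto_const ties_vanish, of 1] by simp
  show ?thesis
    by (rule tendsto_sandwich[OF _ _ lim tendsto_const]) (simp_all add: lower)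
qed

definition first_last_rankings :: "'a set \<Rightarrow> 'a \<Rightarrow> 'a \<Rightarrow> 'a list set" where
  "first_last_rankings C a b = {t \<in> rankings C. position t a = 1 \<and> position t b = card C}"

lemma card_tie_swaps_le:
  assumes "finite C" "a \<in> C" "b \<in> C" "w 1 \<noteq> w (card C)" "p \<in> profiles C n"
  shows "real (card {B \<in> Pow {..<n}. score C w n (swap_votes a b B p) a = score C w n (swap_votes a b B p) b})
         \<le> 2 ^ n * central_binomial_prob (card {i \<in> {..<n}. p i \<in> first_last_rankings C a b})"
proof -
  define ties where
    "ties = {B \<in> Pow {..<n}. score C w n (swap_votes a b B p) a = score C w n (swap_votes a b B p) b}"
  define J where "J = {i \<in> {..<n}. p i \<in> first_last_rankings C a b}"
  define K where "K = {..<n} - J"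
  define x where "x i = sigma w (p i) a - sigma w (p i) b" for i
  define c where "c = (score C w n p a - score C w n p b) / 2"
  have J: "J \<subseteq> {..<n}"
    by (auto simp: J_def)
  then have "finite J" "card J \<le> n"
    using finite_subset card_mono[OF finite_lessThan] by fastforce+
  have "ties \<subseteq> {B. B \<subseteq> J \<union> K \<and> sum x B = c}"
  proof
    fix B assume "B \<in> ties"
    then have B: "B \<subseteq> {..<n}" "score C w n (swap_votes a b B p) a - score C w n (swap_votes a b B p) b = 0"
      by (auto simp: ties_def)
    then have "sum x B = c"
      using score_diff_swap_votes[OF assms(1-3) B(1) assms(5)] by (simp add: x_def c_def)
    then show "B \<in> {B. B \<subseteq> J \<union> K \<and> sum x B = c}"
      using B(1) by (auto simp: K_def)
  qed
  then have "card ties \<le> card {B. B \<subseteq> J \<union> K \<and> sum x B = c}"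
    using \<open>finite J\<close> by (intro card_mono) (auto simp: K_def)
  also have "\<dots> \<le> 2 ^ card K * (card J choose (card J div 2))"
    using \<open>finite J\<close> assms(4)
    by (intro card_subsets_sum_eq_le[where d = "w 1 - w (card C)"])
       (auto simp: K_def x_def J_def first_last_rankings_def sigma_def)
  also have "card K = n - card J"
    using J \<open>finite J\<close> by (simp add: K_def card_Diff_subset)
  finally have "real (card ties) \<le> real (2 ^ (n - card J) * (card J choose (card J div 2)))"
    by (rule of_nat_mono)
  also have "\<dots> = 2 ^ n * central_binomial_prob (card J)"
    using \<open>card J \<le> n\<close> by (simp add: central_binomial_prob_def) (simp add: power_diff)
  finally show ?thesis
    by (simp add: ties_def J_def)
qed

lemma card_score_ties_le:
  assumes "finite C" "a \<in> C" "b \<in> C" "w 1 \<noteq> w (card C)"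
  shows "real (card {p \<in> profiles C n. score C w n p a = score C w n p b}) \<le>
         (\<Sum>p\<in>profiles C n. central_binomial_prob (card {i \<in> {..<n}. p i \<in> first_last_rankings C a b}))"
proof -
  define Z where "Z = {p \<in> profiles C n. score C w n p a = score C w n p b}"
  define k where "k = (\<lambda>p. card {i \<in> {..<n}. p i \<in> first_last_rankings C a b})"
  have "card Z * card (Pow {..<n}) = (\<Sum>p\<in>profiles C n. card {B \<in> Pow {..<n}. swap_votes a b B p \<in> Z})"
    by (rule card_mult_eq_sum_card_bij_betw[OF finite_profiles])
       (auto simp: Z_def intro: bij_betw_swap_votes[OF assms(2,3)])
  then have "real (card Z * 2 ^ n) = real (\<Sum>p\<in>profiles C n. card {B \<in> Pow {..<n}. swap_votes a b B p \<in> Z})"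
    by (simp add: card_Pow)
  then have "real (card Z) * 2 ^ n = (\<Sum>p\<in>profiles C n. real (card {B \<in> Pow {..<n}. swap_votes a b B p \<in> Z}))"
    by (simp only: of_nat_mult of_nat_sum of_nat_power of_nat_numeral)
  also have "\<dots> \<le> (\<Sum>p\<in>profiles C n. 2 ^ n * central_binomial_prob (k p))"
  proof (intro sum_mono)
    fix p assume p: "p \<in> profiles C n"
    have "{B \<in> Pow {..<n}. swap_votes a b B p \<in> Z} =
          {B \<in> Pow {..<n}. score C w n (swap_votes a b B p) a = score C w n (swap_votes a b B p) b}"
      by (intro Collect_cong) (auto simp: Z_def swap_votes_in_profiles[OF assms(2,3) _ p])
    then show "real (card {B \<in> Pow {..<n}. swap_votes a b B p \<in> Z}) \<le> 2 ^ n * central_binomial_prob (k p)"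
      using card_tie_swaps_le[OF assms p] by (simp add: k_def)
  qed
  finally show ?thesis
    by (simp add: Z_def k_def sum_distrib_left[symmetric] mult.commute[of _ "2 ^ n"])
qed

lemma prob_score_tie_le:
  assumes "finite C" "a \<in> C" "b \<in> C" "w 1 \<noteq> w (card C)"
  shows "measure_pmf.prob (profile_pmf C n) {p. score C w n p a = score C w n p b} \<le>
         measure_pmf.expectation (binomial_pmf n (card (first_last_rankings C a b) / card (rankings C)))
           central_binomial_prob"
proof -
  define k where "k = (\<lambda>p. card {i \<in> {..<n}. p i \<in> first_last_rankings C a b})"
  have nonempty: "profiles C n \<noteq> {}"
    using rankings_nonempty[OF assms(1)] by simp
  have "measure_pmf.prob (profile_pmf C n) {p. score C w n p a = score C w n p b} =
        real (card {p \<in> profiles C n. score C w n p a = score C w n p b}) / real (card (profiles C n))"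
    using finite_profiles[where C = C and n = n] nonempty
    by (simp add: profile_pmf_eq_pmf_of_set[OF assms(1)] measure_pmf_of_set Int_def)
  also have "\<dots> \<le> (\<Sum>p\<in>profiles C n. central_binomial_prob (k p)) / real (card (profiles C n))"
    using card_score_ties_le[OF assms] by (intro divide_right_mono) (simp_all add: k_def)
  also have "\<dots> = measure_pmf.expectation (map_pmf k (profile_pmf C n)) central_binomial_prob"
    using finite_profiles[where C = C and n = n] nonempty
    by (simp add: profile_pmf_eq_pmf_of_set[OF assms(1)] integral_pmf_of_set)
  also have "map_pmf k (profile_pmf C n) = binomial_pmf n (card (first_last_rankings C a b) / card (rankings C))"
    using binomial_pmf_altdef_pmf_of_set[of "{..<n}" "rankings C" "first_last_rankings C a b" undefined]
      rankings_nonempty[OF assms(1)]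
    by (simp add: profile_pmf_def k_def first_last_rankings_def Int_absorb2 rankings_def)
  finally show ?thesis .
qed

lemma prob_score_tie_tendsto_0:
  assumes "finite C" "a \<in> C" "b \<in> C" "a \<noteq> b" "w 1 \<noteq> w (card C)"
  shows "(\<lambda>n. measure_pmf.prob (profile_pmf C n) {p. score C w n p a = score C w n p b}) \<longlonglongrightarrow> 0"
proof -
  define q where "q = card (first_last_rankings C a b) / card (rankings C)"
  have "first_last_rankings C a b \<noteq> {}" "first_last_rankings C a b \<subseteq> rankings C" "finite (rankings C)"
    using ranking_first_last_exists[OF assms(1-4)] by (auto simp: first_last_rankings_def rankings_def)
  then have "0 < card (first_last_rankings C a b)" "card (first_last_rankings C a b) \<le> card (rankings C)"
    by (auto simp: card_gt_0_iff card_mono intro: finite_subset)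
  then have "0 < q" "q \<le> 1"
    by (simp_all add: q_def)
  from \<open>0 < q\<close> \<open>q \<le> 1\<close>
  have lim: "(\<lambda>n. measure_pmf.expectation (binomial_pmf n q) central_binomial_prob) \<longlonglongrightarrow> 0"
    by (rule expectation_central_binomial_prob_tendsto_0)
  show ?thesis
    by (rule tendsto_sandwich[OF _ _ tendsto_const lim])
       (use prob_score_tie_le[OF assms(1-3,5)] in \<open>simp_all add: q_def\<close>)
qed

theorem proposition3:
  fixes C :: "'a set" and m :: nat and w :: "nat \<Rightarrow> real"
  assumes "finite C" and "card C = m" and "m \<ge> 3"
    and "w 1 = 1" and "w m = 0"
    and "\<And>i j. 1 \<le> i \<Longrightarrow> i \<le> j \<Longrightarrow> j \<le> m \<Longrightarrow> w j \<le> w i"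
  shows "(\<lambda>n. measure_pmf.prob (profile_pmf C n) {p. inj_on (score C w n p) C}) \<longlonglongrightarrow> 1"
proof (rule prob_inj_on_tendsto_1[OF \<open>finite C\<close>])
  fix a b assume "a \<in> C" "b \<in> C" "a \<noteq> b"
  moreover have "w 1 \<noteq> w (card C)"
    using assms(2,4,5) by simp
  ultimately show "(\<lambda>n. measure_pmf.prob (profile_pmf C n) {p. score C w n p a = score C w n p b}) \<longlonglongrightarrow> 0"
    using prob_score_tie_tendsto_0[OF \<open>finite C\<close>] by blast
qed

end
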